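(* Let $P=\Bbbk[x_1,x_2,x_3]$ with Poisson bracket $\{x_1,x_2\}=0$, $\{x_2,x_3\}=2x_1x_2$, $\{x_3,x_1\}=x_1^2$. Then \[ \mathrm{PAut}_{\mathrm{gr}}(P)=\left\{\begin{bmatrix}a&0&0\\0&b&0\\c&d&a\end{bmatrix}: a,b\in\Bbbk^\times,\ c,d\in\Bbbk\right\},\qquad \mathrm{PR}(P)=\left\{\begin{bmatrix}1&0&0\\0&\xi&0\\0&d&1\end{bmatrix}: \xi\neq1 \text{ a root of unity},\ d\in\Bbbk\right\}. \]
   Context: $\Bbbk$ is algebraically closed of characteristic $0$; $P$ has the standard grading. A graded Poisson automorphism $\phi$ (degree-preserving bijective algebra and Lie homomorphism) is identified with the matrix $[a_{ij}]$ where $\phi(x_i)=\sum_k a_{ik}x_k$. $\mathrm{PR}(P)$ is the set of Poisson reflections: finite-order graded Poisson automorphisms $\phi$ with $\phi|_{P_1}$ having eigenvalues $1,1,\xi$ for a primitive root of unity $\xi\neq1$. *)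

theory Defs
  imports "HOL-Analysis.Analysis" "HOL-Library.Poly_Mapping"
    "HOL-Computational_Algebra.Polynomial"
begin

text \<open>The polynomial ring P = k[x1,x2,x3]: variables are indexed by the
three-element type 3, whose elements 1, 2, 3 (=0) stand for x1, x2, x3.\<close>

type_synonym 'k P3 = "(3 \<Rightarrow>\<^sub>0 nat) \<Rightarrow>\<^sub>0 'k"

definition var :: "3 \<Rightarrow> 'k::comm_ring_1 P3" where
  "var i = Poly_Mapping.single (Poly_Mapping.single i 1) 1"

definition const :: "'k::comm_ring_1 \<Rightarrow> 'k P3" where
  "const c = Poly_Mapping.single 0 c"

definition subst :: "(3 \<Rightarrow> 'k::comm_ring_1 P3) \<Rightarrow> 'k P3 \<Rightarrow> 'k P3" where
  "subst \<sigma> p = (\<Sum>m\<in>Poly_Mapping.keys p. const (Poly_Mapping.lookup p m) * (\<Prod>i\<in>UNIV. \<sigma> i ^ Poly_Mapping.lookup m i))"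

definition pdiff :: "3 \<Rightarrow> 'k::comm_ring_1 P3 \<Rightarrow> 'k P3" where
  "pdiff i p = (\<Sum>m\<in>Poly_Mapping.keys p.
      Poly_Mapping.single (m - Poly_Mapping.single i 1) (of_nat (Poly_Mapping.lookup m i) * Poly_Mapping.lookup p m))"

definition gbr :: "3 \<Rightarrow> 3 \<Rightarrow> 'k::comm_ring_1 P3" where
  "gbr i j =
    (if i = 2 \<and> j = 3 then 2 * var 1 * var 2
     else if i = 3 \<and> j = 2 then - (2 * var 1 * var 2)
     else if i = 3 \<and> j = 1 then var 1 ^ 2
     else if i = 1 \<and> j = 3 then - (var 1 ^ 2)
     else 0)"

definition pbr :: "'k::comm_ring_1 P3 \<Rightarrow> 'k P3 \<Rightarrow> 'k P3" where
  "pbr f g = (\<Sum>i\<in>UNIV. \<Sum>j\<in>UNIV. pdiff i f * pdiff j g * gbr i j)"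

definition phi :: "'k::comm_ring_1 ^3^3 \<Rightarrow> 'k P3 \<Rightarrow> 'k P3" where
  "phi A = subst (\<lambda>i. \<Sum>k\<in>UNIV. const (A $ i $ k) * var k)"

definition PAut_gr :: "('k::comm_ring_1 ^3^3) set" where
  "PAut_gr = {A. bij (phi A) \<and> (\<forall>f g. phi A (pbr f g) = pbr (phi A f) (phi A g))}"

definition charpoly3 :: "'k::comm_ring_1 ^3^3 \<Rightarrow> 'k poly" where
  "charpoly3 A = det (\<chi> i j. (if i = j then [:0, 1:] else 0) - [:A $ i $ j:])"

definition root_of_unity :: "'k::comm_ring_1 \<Rightarrow> bool" where
  "root_of_unity z \<longleftrightarrow> (\<exists>n>0. z ^ n = 1)"

definition PR :: "('k::comm_ring_1 ^3^3) set" where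
  "PR = {A. A \<in> PAut_gr \<and> (\<exists>n>0. (phi A ^^ n) = id) \<and>
           (\<exists>\<xi>. root_of_unity \<xi> \<and> \<xi> \<noteq> 1 \<and>
                charpoly3 A = [:-1, 1:] ^ 2 * [:-\<xi>, 1:])}"

definition mat3 :: "'k::zero \<Rightarrow> 'k \<Rightarrow> 'k \<Rightarrow> 'k \<Rightarrow> 'k \<Rightarrow> 'k \<Rightarrow> 'k \<Rightarrow> 'k \<Rightarrow> 'k \<Rightarrow> 'k^3^3" where
  "mat3 a11 a12 a13 a21 a22 a23 a31 a32 a33 =
     (\<chi> i j. if i = 1 then (if j = 1 then a11 else if j = 2 then a12 else a13)
             else if i = 2 then (if j = 1 then a21 else if j = 2 then a22 else a23)
             else (if j = 1 then a31 else if j = 2 then a32 else a33))"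

end

theory Submission
  imports Defs
begin

(* A graded endomorphism phi A is a Poisson map iff it respects the brackets of the generators.
   Every bracket of two linear forms is x1 times a linear form, so comparing coefficients in
   phi A {x3,x1} = (phi A x1)^2 forces phi A x1 = a x1 and A_33 = a, and then comparing them in
   phi A {x2,x3} = 2 (phi A x1) (phi A x2) forces A_21 = A_23 = 0 (here char k <> 2, 3 is used).
   Conversely every such invertible matrix respects the generator brackets.
   For a reflection, (t - a)^2 (t - b) = (t - 1)^2 (t - xi) with xi <> 1 gives a = 1 and b = xi;
   the n-th power of the matrix has (3,1) entry n c, so finite order forces c = 0, while for
   c = 0 the order divides n as soon as xi^n = 1, because then 1 + xi + ... + xi^(n-1) = 0. *)

section \<open>Substitution and partial derivatives\<close>

abbreviation var_exp :: "3 \<Rightarrow> (3 \<Rightarrow>\<^sub>0 nat)" where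
  "var_exp i \<equiv> Poly_Mapping.single i 1"

lemma var_exp_eq_iff: "var_exp k = var_exp l \<longleftrightarrow> k = l"
  by (metis lookup_single_eq lookup_single_not_eq one_neq_zero)

lemma var_exp_add_eq_iff:
  "var_exp k + var_exp l = var_exp p + var_exp q \<longleftrightarrow> (k = p \<and> l = q) \<or> (k = q \<and> l = p)"
proof
  assume eq: "var_exp k + var_exp l = var_exp p + var_exp q"
  then have "Poly_Mapping.lookup (var_exp k + var_exp l) k = Poly_Mapping.lookup (var_exp p + var_exp q) k"
    by simp
  then have "k = p \<or> k = q"
    by (auto simp: lookup_add lookup_single when_def split: if_splits)
  then show "(k = p \<and> l = q) \<or> (k = q \<and> l = p)"
    using eq var_exp_eq_iff by (metis add.commute add_left_cancel)
qed (auto simp: add.commute)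

definition subst_monom :: "(3 \<Rightarrow> 'k::comm_ring_1 P3) \<Rightarrow> (3 \<Rightarrow>\<^sub>0 nat) \<Rightarrow> 'k P3" where
  "subst_monom \<sigma> m = (\<Prod>i\<in>UNIV. \<sigma> i ^ Poly_Mapping.lookup m i)"

lemma subst_monom_add: "subst_monom \<sigma> (m + n) = subst_monom \<sigma> m * subst_monom \<sigma> n"
  by (simp add: subst_monom_def lookup_add power_add prod.distrib)

lemma subst_monom_var_exp: "subst_monom \<sigma> (var_exp i) = \<sigma> i"
proof -
  have "subst_monom \<sigma> (var_exp i) = (\<Prod>j\<in>UNIV. if j = i then \<sigma> i else 1)"
    unfolding subst_monom_def by (intro prod.cong) (auto simp: lookup_single when_def)
  then show ?thesis by (simp add: prod.delta)
qed

lemma const_simps [simp]: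
  "const 0 = 0" "const 1 = 1" "const (numeral n) = numeral n"
  by (simp_all add: const_def)

lemma const_add: "const (a + b) = const a + const b"
  by (simp add: const_def single_add)

lemma const_mult: "const (a * b) = const a * const b"
  by (simp add: const_def mult_single)

lemma const_uminus: "const (- a) = - const a"
  by (simp add: const_def single_uminus)

lemma const_diff: "const (a - b) = const a - const b"
  by (simp add: const_def single_diff)

lemma const_sum: "const (sum f S) = (\<Sum>x\<in>S. const (f x))"
  by (induction S rule: infinite_finite_induct) (auto simp: const_add)

lemma sum_single_lookup: "(\<Sum>m\<in>Poly_Mapping.keys p. Poly_Mapping.single m (Poly_Mapping.lookup p m)) = p"
  by (rule poly_mapping_eqI) (simp add: lookup_sum lookup_single when_def in_keys_iff)

lemma subst_eq_sum_superset:
  assumes "finite S" "Poly_Mapping.keys p \<subseteq> S"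
  shows "subst \<sigma> p = (\<Sum>m\<in>S. const (Poly_Mapping.lookup p m) * subst_monom \<sigma> m)"
  unfolding subst_def subst_monom_def
  by (rule sum.mono_neutral_left) (use assms in \<open>auto simp: in_keys_iff\<close>)

lemma subst_add: "subst \<sigma> (p + q) = subst \<sigma> p + subst \<sigma> q"
proof -
  let ?S = "Poly_Mapping.keys p \<union> Poly_Mapping.keys q"
  have "subst \<sigma> (p + q) = (\<Sum>m\<in>?S. const (Poly_Mapping.lookup (p + q) m) * subst_monom \<sigma> m)"
    using keys_add[of p q] by (intro subst_eq_sum_superset) auto
  also have "\<dots> = subst \<sigma> p + subst \<sigma> q"
    by (simp add: subst_eq_sum_superset[of ?S p] subst_eq_sum_superset[of ?S q]
        lookup_add const_add distrib_right sum.distrib)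
  finally show ?thesis .
qed

lemma subst_0 [simp]: "subst \<sigma> 0 = 0"
  by (simp add: subst_def)

lemma subst_sum: "subst \<sigma> (sum f S) = (\<Sum>x\<in>S. subst \<sigma> (f x))"
  using sum_comp_morphism[of "subst \<sigma>" f S] by (simp add: o_def subst_add)

lemma subst_single: "subst \<sigma> (Poly_Mapping.single m a) = const a * subst_monom \<sigma> m"
  by (subst subst_eq_sum_superset[of "{m}"]) (auto simp: lookup_single)

lemma mult_eq_sum_singles:
  "p * q = (\<Sum>m\<in>Poly_Mapping.keys p. \<Sum>n\<in>Poly_Mapping.keys q.
              Poly_Mapping.single m (Poly_Mapping.lookup p m) * Poly_Mapping.single n (Poly_Mapping.lookup q n))"
  by (subst (1) sum_single_lookup[symmetric], subst (1) sum_single_lookup[symmetric])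
    (simp add: sum_product)

lemma subst_mult: "subst \<sigma> (p * q) = subst \<sigma> p * subst \<sigma> q"
proof -
  let ?p = "\<lambda>m. Poly_Mapping.single m (Poly_Mapping.lookup p m)"
  let ?q = "\<lambda>n. Poly_Mapping.single n (Poly_Mapping.lookup q n)"
  have "subst \<sigma> (p * q) =
      (\<Sum>m\<in>Poly_Mapping.keys p. \<Sum>n\<in>Poly_Mapping.keys q. subst \<sigma> (?p m) * subst \<sigma> (?q n))"
    by (subst mult_eq_sum_singles) (simp add: subst_sum mult_single subst_single const_mult subst_monom_add mult_ac)
  also have "\<dots> = subst \<sigma> (\<Sum>m\<in>Poly_Mapping.keys p. ?p m) * subst \<sigma> (\<Sum>n\<in>Poly_Mapping.keys q. ?q n)"
    by (simp add: subst_sum sum_product)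
  finally show ?thesis
    by (simp only: sum_single_lookup)
qed

lemma subst_const: "subst \<sigma> (const c) = const c"
  using subst_single[of \<sigma> 0 c] by (simp add: subst_monom_def const_def)

lemma subst_var: "subst \<sigma> (var i) = \<sigma> i"
  unfolding var_def subst_single subst_monom_var_exp by simp

lemma subst_numeral: "subst \<sigma> (numeral n) = numeral n"
  using subst_const[of \<sigma> "numeral n"] by simp

lemma pdiff_eq_sum_superset:
  assumes "finite S" "Poly_Mapping.keys p \<subseteq> S"
  shows "pdiff i p = (\<Sum>m\<in>S. Poly_Mapping.single (m - var_exp i)
                         (of_nat (Poly_Mapping.lookup m i) * Poly_Mapping.lookup p m))"
  unfolding pdiff_def
  by (rule sum.mono_neutral_left) (use assms in \<open>auto simp: in_keys_iff\<close>)

lemma pdiff_add: "pdiff i (p + q) = pdiff i p + pdiff i q"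
proof -
  let ?S = "Poly_Mapping.keys p \<union> Poly_Mapping.keys q"
  have "pdiff i (p + q) = (\<Sum>m\<in>?S. Poly_Mapping.single (m - var_exp i)
           (of_nat (Poly_Mapping.lookup m i) * Poly_Mapping.lookup (p + q) m))"
    using keys_add[of p q] by (intro pdiff_eq_sum_superset) auto
  also have "\<dots> = pdiff i p + pdiff i q"
    by (simp add: pdiff_eq_sum_superset[of ?S p] pdiff_eq_sum_superset[of ?S q]
        lookup_add distrib_left single_add sum.distrib)
  finally show ?thesis .
qed

lemma pdiff_0 [simp]: "pdiff i 0 = 0"
  by (simp add: pdiff_def)

lemma pdiff_sum: "pdiff i (sum f S) = (\<Sum>x\<in>S. pdiff i (f x))"
  using sum_comp_morphism[of "pdiff i" f S] by (simp add: o_def pdiff_add)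

lemma pdiff_single:
  "pdiff i (Poly_Mapping.single m a) =
     Poly_Mapping.single (m - var_exp i) (of_nat (Poly_Mapping.lookup m i) * a)"
  by (subst pdiff_eq_sum_superset[of "{m}"]) (auto simp: lookup_single)

lemma single_mult_single_diff_var_exp:
  fixes a b :: "'k::comm_ring_1"
  shows "Poly_Mapping.single m a * Poly_Mapping.single (n - var_exp i) (of_nat (Poly_Mapping.lookup n i) * b) =
     Poly_Mapping.single (m + n - var_exp i) (of_nat (Poly_Mapping.lookup n i) * (a * b))"
proof (cases "Poly_Mapping.lookup n i = 0")
  case False
  then have "m + (n - var_exp i) = m + n - var_exp i"
    by (intro poly_mapping_eqI) (auto simp: lookup_add lookup_minus lookup_single when_def)
  then show ?thesis
    by (simp add: mult_single mult_ac)
qed simp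

lemma pdiff_single_mult:
  fixes a b :: "'k::comm_ring_1"
  shows "pdiff i (Poly_Mapping.single m a * Poly_Mapping.single n b) =
     Poly_Mapping.single m a * pdiff i (Poly_Mapping.single n b) +
     Poly_Mapping.single n b * pdiff i (Poly_Mapping.single m a)"
  unfolding pdiff_single single_mult_single_diff_var_exp
  by (simp add: mult_single pdiff_single lookup_add add.commute[of n m]
      single_add[symmetric] distrib_right mult.commute[of b a] algebra_simps)

lemma pdiff_mult: "pdiff i (p * q) = p * pdiff i q + q * pdiff i p"
proof -
  let ?p = "\<lambda>m. Poly_Mapping.single m (Poly_Mapping.lookup p m)"
  let ?q = "\<lambda>n. Poly_Mapping.single n (Poly_Mapping.lookup q n)"
  have "pdiff i (p * q) = (\<Sum>m\<in>Poly_Mapping.keys p. \<Sum>n\<in>Poly_Mapping.keys q.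
                             ?p m * pdiff i (?q n) + ?q n * pdiff i (?p m))"
    by (subst mult_eq_sum_singles) (simp add: pdiff_sum pdiff_single_mult)
  also have "\<dots> = (\<Sum>m\<in>Poly_Mapping.keys p. ?p m) * pdiff i (\<Sum>n\<in>Poly_Mapping.keys q. ?q n)
                 + (\<Sum>n\<in>Poly_Mapping.keys q. ?q n) * pdiff i (\<Sum>m\<in>Poly_Mapping.keys p. ?p m)"
    by (simp add: pdiff_sum sum_product sum.distrib sum.swap[of _ "Poly_Mapping.keys q"])
  finally show ?thesis
    by (simp only: sum_single_lookup)
qed

lemma pdiff_const [simp]: "pdiff i (const c) = 0"
  by (simp add: const_def pdiff_single)

lemma pdiff_var: "pdiff i (var j) = (if i = j then 1 else 0)"
  by (auto simp: var_def pdiff_single lookup_single when_def)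

lemma var_power: "var i ^ n = Poly_Mapping.single (Poly_Mapping.single i n) 1"
  by (induction n) (simp_all add: var_def mult_single single_add[symmetric])

lemma single_eq_const_mult_subst_monom_var:
  "Poly_Mapping.single m a = const a * subst_monom var m"
proof -
  have "(\<Sum>i\<in>UNIV. Poly_Mapping.single i (Poly_Mapping.lookup m i)) = m"
    by (rule poly_mapping_eqI) (simp add: lookup_sum lookup_single when_def)
  moreover have "(\<Prod>i\<in>S. Poly_Mapping.single (f i) 1) = Poly_Mapping.single (sum f S) (1::'a::comm_ring_1)"
    for S and f :: "3 \<Rightarrow> 3 \<Rightarrow>\<^sub>0 nat"
    by (induction S rule: infinite_finite_induct) (auto simp: mult_single)
  ultimately show ?thesis
    by (simp add: subst_monom_def var_power const_def mult_single)
qed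

lemma P3_induct [case_names const var add mult]:
  fixes p :: "'k::comm_ring_1 P3"
  assumes const: "\<And>c. Q (const c)" and var: "\<And>i. Q (var i)"
    and add: "\<And>p q. Q p \<Longrightarrow> Q q \<Longrightarrow> Q (p + q)"
    and mult: "\<And>p q. Q p \<Longrightarrow> Q q \<Longrightarrow> Q (p * q)"
  shows "Q p"
proof -
  have "Q (var i ^ n)" for i n
    using const[of 1] by (induction n) (auto intro: var mult)
  then have "Q (\<Prod>i\<in>S. var i ^ f i)" for S and f :: "3 \<Rightarrow> nat"
    using const[of 1] by (induction S rule: infinite_finite_induct) (auto intro: mult)
  then have "Q (Poly_Mapping.single m a)" for m a
    unfolding single_eq_const_mult_subst_monom_var subst_monom_def by (intro mult const)
  then have "Q (\<Sum>m\<in>S. Poly_Mapping.single m (Poly_Mapping.lookup p m))" for S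
    using const[of 0] by (induction S rule: infinite_finite_induct) (auto intro: add)
  from this[of "Poly_Mapping.keys p"] show ?thesis
    by (simp only: sum_single_lookup)
qed

lemma subst_subst: "subst \<tau> (subst \<sigma> p) = subst (\<lambda>i. subst \<tau> (\<sigma> i)) p"
  by (induction p rule: P3_induct) (simp_all add: subst_const subst_var subst_add subst_mult)

lemma subst_var_eq_self: "subst var p = p"
  by (induction p rule: P3_induct) (simp_all add: subst_const subst_var subst_add subst_mult)

section \<open>The Poisson bracket\<close>

lemma gbr_antisym: "gbr j i = - gbr i j"
  using exhaust_3[of i] exhaust_3[of j] by (auto simp: gbr_def)

lemma pbr_add_left: "pbr (p + q) g = pbr p g + pbr q g"
  by (simp add: pbr_def pdiff_add distrib_right sum.distrib)

lemma pbr_mult_left: "pbr (p * q) g = p * pbr q g + q * pbr p g"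
  by (simp add: pbr_def pdiff_mult algebra_simps sum.distrib sum_distrib_left)

lemma pbr_const_left: "pbr (const c) g = 0"
  by (simp add: pbr_def)

lemma pbr_antisym: "pbr g f = - pbr f g"
proof -
  have "pbr g f = (\<Sum>j\<in>UNIV. \<Sum>i\<in>UNIV. pdiff i g * pdiff j f * gbr i j)"
    unfolding pbr_def by (rule sum.swap)
  also have "\<dots> = - pbr f g"
  proof -
    have "pdiff i g * pdiff j f * gbr i j = - (pdiff j f * pdiff i g * gbr j i)" for i j
      by (simp add: gbr_antisym[of j i])
    then show ?thesis
      by (simp add: pbr_def sum_negf)
  qed
  finally show ?thesis .
qed

lemma pbr_var_var: "pbr (var i) (var j) = gbr i j"
  using exhaust_3[of i] exhaust_3[of j] by (auto simp: pbr_def pdiff_var sum_3)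

section \<open>Linear forms and the endomorphisms given by matrices\<close>

definition lin :: "'k::comm_ring_1^3 \<Rightarrow> 'k P3" where
  "lin v = (\<Sum>k\<in>UNIV. const (v $ k) * var k)"

lemma lin_eq_single_sum: "lin v = (\<Sum>k\<in>UNIV. Poly_Mapping.single (var_exp k) (v $ k))"
  by (simp add: lin_def const_def var_def mult_single)

lemma lookup_lin: "Poly_Mapping.lookup (lin v) (var_exp k) = v $ k"
  unfolding lin_eq_single_sum lookup_sum lookup_single var_exp_eq_iff by (simp add: when_def)

lemma lin_inject: "lin u = lin v \<longleftrightarrow> u = v"
  by (metis lookup_lin vec_eq_iff)

lemma lin_zero [simp]: "lin 0 = 0"
  by (simp add: lin_def)

lemma var_eq_lin_axis: "var i = lin (axis i 1)"
  using exhaust_3[of i] by (auto simp: lin_def axis_def sum_3)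

lemma pdiff_lin: "pdiff i (lin v) = const (v $ i)"
  by (simp add: lin_def pdiff_sum pdiff_mult pdiff_var if_distrib[of "\<lambda>x. _ * x"] cong: if_cong)

lemma lookup_lin_mult:
  "Poly_Mapping.lookup (lin u * lin v) (var_exp p + var_exp q) =
     (if p = q then u $ p * v $ p else u $ p * v $ q + u $ q * v $ p)"
proof -
  have prod: "lin u * lin v =
      (\<Sum>k\<in>UNIV. \<Sum>l\<in>UNIV. Poly_Mapping.single (var_exp k + var_exp l) (u $ k * v $ l))"
    by (simp add: lin_eq_single_sum sum_product mult_single)
  show ?thesis
    unfolding prod lookup_sum lookup_single var_exp_add_eq_iff
    using exhaust_3[of p] exhaust_3[of q] by (elim disjE) (simp_all add: when_def sum_3)
qed

lemma pbr_lin_lin: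
  "pbr (lin u) (lin v) =
     var 1 * lin (vector [u $ 3 * v $ 1 - u $ 1 * v $ 3, 2 * (u $ 2 * v $ 3 - u $ 3 * v $ 2), 0])"
proof -
  have "pbr (lin u) (lin v) = (\<Sum>i\<in>UNIV. \<Sum>j\<in>UNIV. const (u $ i * v $ j) * gbr i j)"
    by (simp add: pbr_def pdiff_lin const_mult)
  also have "\<dots> = var 1 * (const (u $ 3 * v $ 1 - u $ 1 * v $ 3) * var 1
                     + const (2 * (u $ 2 * v $ 3 - u $ 3 * v $ 2)) * var 2)"
    by (simp add: sum_3 gbr_def const_diff const_mult algebra_simps power2_eq_square)
  also have "\<dots> = var 1 * lin (vector [u $ 3 * v $ 1 - u $ 1 * v $ 3, 2 * (u $ 2 * v $ 3 - u $ 3 * v $ 2), 0])"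
    by (simp add: lin_def sum_3)
  finally show ?thesis .
qed

lemma phi_eq_subst_lin: "phi A = subst (\<lambda>i. lin (A $ i))"
  by (simp add: phi_def lin_def)

lemma phi_add: "phi A (p + q) = phi A p + phi A q"
  by (simp add: phi_eq_subst_lin subst_add)

lemma phi_mult: "phi A (p * q) = phi A p * phi A q"
  by (simp add: phi_eq_subst_lin subst_mult)

lemma phi_const: "phi A (const c) = const c"
  by (simp add: phi_eq_subst_lin subst_const)

lemma phi_zero [simp]: "phi A 0 = 0"
  by (simp add: phi_eq_subst_lin)

lemma phi_uminus: "phi A (- p) = - phi A p"
  using phi_add[of A p "- p"] by (simp add: eq_neg_iff_add_eq_0 add.commute)

lemma phi_numeral: "phi A (numeral n) = numeral n"
  by (simp add: phi_eq_subst_lin subst_numeral)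

lemma phi_var: "phi A (var i) = lin (A $ i)"
  by (simp add: phi_eq_subst_lin subst_var)

lemma phi_lin: "phi A (lin v) = lin (v v* A)"
proof -
  have "phi A (lin v) = (\<Sum>k\<in>UNIV. \<Sum>l\<in>UNIV. const (v $ k * A $ k $ l) * var l)"
    by (simp add: lin_def phi_eq_subst_lin subst_sum subst_mult subst_const subst_var
        sum_distrib_left const_mult mult.assoc)
  also have "\<dots> = (\<Sum>l\<in>UNIV. \<Sum>k\<in>UNIV. const (v $ k * A $ k $ l) * var l)"
    by (rule sum.swap)
  also have "\<dots> = lin (v v* A)"
    by (simp add: lin_def vector_matrix_mult_def const_sum sum_distrib_right sum_distrib_left mult.commute)
  finally show ?thesis .
qed

lemma phi_phi: "phi A (phi B p) = phi (B ** A) p"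
proof -
  have "(B ** A) $ i = B $ i v* A" for i
    by (simp add: vec_eq_iff matrix_matrix_mult_def vector_matrix_mult_def mult.commute)
  then show ?thesis
    by (simp add: phi_eq_subst_lin subst_subst phi_lin[unfolded phi_eq_subst_lin])
qed

lemma phi_mat_1: "phi (mat 1) p = p"
proof -
  have row: "mat 1 $ i = axis i 1" for i :: 3
    by (simp add: mat_def axis_def vec_eq_iff)
  show ?thesis
    by (simp only: phi_eq_subst_lin row var_eq_lin_axis[symmetric] subst_var_eq_self)
qed

lemma phi_eq_id_iff: "phi A = id \<longleftrightarrow> A = mat 1"
proof
  assume "phi A = id"
  then have "lin (A $ i) = lin (mat 1 $ i)" for i
    by (metis id_apply phi_var phi_mat_1)
  then show "A = mat 1"
    by (simp add: lin_inject vec_eq_iff)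
qed (simp add: fun_eq_iff phi_mat_1)

lemma bij_phi_if_invertible:
  assumes "invertible A"
  shows "bij (phi A)"
proof -
  obtain B where "A ** B = mat 1" "B ** A = mat 1"
    using assms by (auto simp: invertible_def)
  then have "phi B \<circ> phi A = id" "phi A \<circ> phi B = id"
    by (simp_all add: fun_eq_iff phi_phi phi_mat_1)
  then show ?thesis
    by (rule o_bij)
qed

lemma row_nonzero_if_inj_phi:
  fixes A :: "'k::comm_ring_1^3^3"
  assumes inj: "inj (phi A)"
  shows "A $ i \<noteq> 0"
proof
  assume "A $ i = 0"
  then have "phi A (var i) = phi A 0"
    by (simp add: phi_var)
  then have "var i = (0 :: 'k P3)"
    by (rule injD[OF inj])
  then show False
    by (metis lookup_single_eq lookup_zero one_neq_zero var_def)
qed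

lemma phi_pbr_iff_generators:
  "(\<forall>f g. phi A (pbr f g) = pbr (phi A f) (phi A g)) \<longleftrightarrow>
   (\<forall>i j. phi A (gbr i j) = pbr (lin (A $ i)) (lin (A $ j)))"
proof (intro iffI allI)
  fix i j
  assume "\<forall>f g. phi A (pbr f g) = pbr (phi A f) (phi A g)"
  then show "phi A (gbr i j) = pbr (lin (A $ i)) (lin (A $ j))"
    by (metis pbr_var_var phi_var)
next
  fix f g
  assume gen: "\<forall>i j. phi A (gbr i j) = pbr (lin (A $ i)) (lin (A $ j))"
  have left: "phi A (pbr f g) = pbr (phi A f) (phi A g)"
    if "\<And>i. phi A (pbr (var i) g) = pbr (phi A (var i)) (phi A g)" for f g
  proof (induction f rule: P3_induct)
    case (const c)
    then show ?case by (simp add: pbr_const_left phi_const)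
  next
    case (var i)
    then show ?case by (rule that)
  next
    case (add p q)
    then show ?case by (simp add: pbr_add_left phi_add)
  next
    case (mult p q)
    then show ?case by (simp add: pbr_mult_left phi_add phi_mult)
  qed
  have var_right: "phi A (pbr h (var j)) = pbr (phi A h) (phi A (var j))" for h j
    by (rule left) (use gen in \<open>simp add: pbr_var_var phi_var\<close>)
  have "phi A (pbr (var i) g) = pbr (phi A (var i)) (phi A g)" for i
    using var_right[of g i] by (metis pbr_antisym phi_uminus)
  then show "phi A (pbr f g) = pbr (phi A f) (phi A g)"
    by (rule left)
qed

section \<open>Graded Poisson automorphisms\<close>

lemma mat3_nth [simp]:
  "mat3 a11 a12 a13 a21 a22 a23 a31 a32 a33 $ 1 $ 1 = a11"
  "mat3 a11 a12 a13 a21 a22 a23 a31 a32 a33 $ 1 $ 2 = a12"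
  "mat3 a11 a12 a13 a21 a22 a23 a31 a32 a33 $ 1 $ 3 = a13"
  "mat3 a11 a12 a13 a21 a22 a23 a31 a32 a33 $ 2 $ 1 = a21"
  "mat3 a11 a12 a13 a21 a22 a23 a31 a32 a33 $ 2 $ 2 = a22"
  "mat3 a11 a12 a13 a21 a22 a23 a31 a32 a33 $ 2 $ 3 = a23"
  "mat3 a11 a12 a13 a21 a22 a23 a31 a32 a33 $ 3 $ 1 = a31"
  "mat3 a11 a12 a13 a21 a22 a23 a31 a32 a33 $ 3 $ 2 = a32"
  "mat3 a11 a12 a13 a21 a22 a23 a31 a32 a33 $ 3 $ 3 = a33"
  by (simp_all add: mat3_def)

lemma mat3_in_PAut_gr:
  fixes a b c d :: "'k::field"
  assumes "a \<noteq> 0" "b \<noteq> 0"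
  shows "mat3 a 0 0 0 b 0 c d a \<in> PAut_gr"
proof -
  let ?A = "mat3 a 0 0 0 b 0 c d a"
  have "invertible ?A"
    using assms by (simp add: invertible_det_nz det_3)
  moreover have "phi ?A (gbr i j) = pbr (lin (?A $ i)) (lin (?A $ j))" for i j
    unfolding pbr_lin_lin using exhaust_3[of i] exhaust_3[of j]
    by (elim disjE) (simp_all add: gbr_def phi_mult phi_var phi_numeral phi_uminus
        lin_def sum_3 const_mult const_uminus const_diff power2_eq_square algebra_simps)
  ultimately show ?thesis
    by (simp add: PAut_gr_def bij_phi_if_invertible phi_pbr_iff_generators)
qed

lemma Poisson_matrix_entry_equations:
  fixes A :: "'k::comm_ring_1^3^3"
  assumes gen: "\<And>i j. phi A (gbr i j) = pbr (lin (A $ i)) (lin (A $ j))"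
  shows "A $ 1 $ 2 * A $ 1 $ 2 = 0" and "A $ 1 $ 3 * A $ 1 $ 3 = 0"
    and "A $ 1 $ 1 * A $ 1 $ 1 = A $ 3 $ 3 * A $ 1 $ 1 - A $ 3 $ 1 * A $ 1 $ 3"
    and "(A $ 1 $ 1 * A $ 2 $ 3 + A $ 1 $ 3 * A $ 2 $ 1) * 2 = 0"
    and "A $ 1 $ 1 * A $ 2 $ 1 * 2 = A $ 2 $ 3 * A $ 3 $ 1 - A $ 2 $ 1 * A $ 3 $ 3"
proof -
  define u v r where "u = A $ 1" and "v = A $ 2" and "r = A $ 3"
  have "lin u * lin u =
      lin (axis 1 1) * lin (vector [r $ 3 * u $ 1 - r $ 1 * u $ 3, 2 * (r $ 2 * u $ 3 - r $ 3 * u $ 2), 0])"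
    using gen[of 3 1] unfolding var_eq_lin_axis[symmetric]
    by (simp add: gbr_def phi_mult phi_var pbr_lin_lin power2_eq_square u_def r_def)
  then have sq: "Poly_Mapping.lookup (lin u * lin u) (var_exp p + var_exp q) =
      Poly_Mapping.lookup (lin (axis 1 1) * lin (vector [r $ 3 * u $ 1 - r $ 1 * u $ 3,
          2 * (r $ 2 * u $ 3 - r $ 3 * u $ 2), 0])) (var_exp p + var_exp q)" for p q
    by (simp only:)
  have "2 * (lin u * lin v) =
      lin (axis 1 1) * lin (vector [v $ 3 * r $ 1 - v $ 1 * r $ 3, 2 * (v $ 2 * r $ 3 - v $ 3 * r $ 2), 0])"
    using gen[of 2 3] unfolding var_eq_lin_axis[symmetric]
    by (simp add: gbr_def phi_mult phi_numeral phi_var pbr_lin_lin u_def v_def r_def mult_ac)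
  then have prod: "Poly_Mapping.lookup (lin u * lin v) (var_exp p + var_exp q) * 2 =
      Poly_Mapping.lookup (lin (axis 1 1) * lin (vector [v $ 3 * r $ 1 - v $ 1 * r $ 3,
          2 * (v $ 2 * r $ 3 - v $ 3 * r $ 2), 0])) (var_exp p + var_exp q)" for p q
    by (metis lookup_add mult_2 mult_2_right)
  (* unfold before simplifying: simp would first turn the exponent 1 of var_exp into Suc 0 *)
  note sq = sq[unfolded lookup_lin_mult, unfolded u_def v_def r_def]
    and prod = prod[unfolded lookup_lin_mult, unfolded u_def v_def r_def]
  show "A $ 1 $ 2 * A $ 1 $ 2 = 0"
    using sq[of 2 2] by (simp add: axis_def)
  show "A $ 1 $ 3 * A $ 1 $ 3 = 0"
    using sq[of 3 3] by (simp add: axis_def)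
  show "A $ 1 $ 1 * A $ 1 $ 1 = A $ 3 $ 3 * A $ 1 $ 1 - A $ 3 $ 1 * A $ 1 $ 3"
    using sq[of 1 1] by (simp add: axis_def)
  show "(A $ 1 $ 1 * A $ 2 $ 3 + A $ 1 $ 3 * A $ 2 $ 1) * 2 = 0"
    using prod[of 1 3] by (simp add: axis_def)
  show "A $ 1 $ 1 * A $ 2 $ 1 * 2 = A $ 2 $ 3 * A $ 3 $ 1 - A $ 2 $ 1 * A $ 3 $ 3"
    using prod[of 1 1] by (simp add: axis_def)
qed

lemma PAut_gr_imp_mat3:
  fixes A :: "'k::{idom, ring_char_0}^3^3"
  assumes "A \<in> PAut_gr"
  obtains a b c d where "A = mat3 a 0 0 0 b 0 c d a" "a \<noteq> 0" "b \<noteq> 0"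
proof -
  have inj: "inj (phi A)"
    and gen: "\<And>i j. phi A (gbr i j) = pbr (lin (A $ i)) (lin (A $ j))"
    using assms by (auto simp: PAut_gr_def bij_is_inj phi_pbr_iff_generators)
  note eqs = Poisson_matrix_entry_equations[OF gen]
  have a12: "A $ 1 $ 2 = 0" and a13: "A $ 1 $ 3 = 0"
    using eqs(1,2) by simp_all
  have a11: "A $ 1 $ 1 \<noteq> 0"
    using row_nonzero_if_inj_phi[OF inj, of 1] a12 a13 by (auto simp: vec_eq_iff forall_3)
  have a33: "A $ 3 $ 3 = A $ 1 $ 1"
    using eqs(3) a11 a13 by simp
  have a23: "A $ 2 $ 3 = 0"
    using eqs(4) a11 a13 by simp
  have a21: "A $ 2 $ 1 = 0"
    using eqs(5) a11 a23 a33 by (simp add: algebra_simps)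
  have a22: "A $ 2 $ 2 \<noteq> 0"
    using row_nonzero_if_inj_phi[OF inj, of 2] a21 a23 by (auto simp: vec_eq_iff forall_3)
  have "A = mat3 (A $ 1 $ 1) 0 0 0 (A $ 2 $ 2) 0 (A $ 3 $ 1) (A $ 3 $ 2) (A $ 1 $ 1)"
    using a12 a13 a21 a23 a33 by (simp add: vec_eq_iff forall_3)
  then show ?thesis
    using a11 a22 by (rule that)
qed

lemma PAut_gr_eq:
  "(PAut_gr :: ('k::field_char_0^3^3) set) = {mat3 a 0 0 0 b 0 c d a | a b c d. a \<noteq> 0 \<and> b \<noteq> 0}"
  by (auto elim!: PAut_gr_imp_mat3 intro: mat3_in_PAut_gr)

section \<open>Poisson reflections\<close>

lemma charpoly3_mat3: "charpoly3 (mat3 a 0 0 0 b 0 c d a) = [:-a, 1:] ^ 2 * [:-b, 1:]"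
  by (simp add: charpoly3_def det_3 power2_eq_square algebra_simps)

lemma linear_factors_eq:
  fixes a b x :: "'k::idom"
  assumes eq: "[:-a, 1:] ^ 2 * [:-b, 1:] = [:-1, 1:] ^ 2 * [:-x, 1:]" and "x \<noteq> 1"
  shows "a = 1 \<and> b = x"
proof -
  have "poly ([:-1, 1:] ^ 2 * [:-x, 1:]) a = 0"
    unfolding eq[symmetric] by simp
  then have "a = 1 \<or> a = x"
    by simp
  moreover have "a \<noteq> x" if "a \<noteq> 1"
  proof
    assume "a = x"
    have "poly ([:-a, 1:] ^ 2 * [:-b, 1:]) 1 = 0"
      unfolding eq by simp
    then have "b = 1"
      using \<open>a \<noteq> 1\<close> by simp
    then have "([:-1, 1:] * [:-x, 1:]) * [:-x, 1:] = ([:-1, 1:] * [:-x, 1:]) * [:-1, 1:]"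
      using eq \<open>a = x\<close> by (simp add: power2_eq_square ac_simps)
    then show False
      using \<open>x \<noteq> 1\<close> by simp
  qed
  ultimately have "a = 1"
    by blast
  with eq have "[:-1, 1:] ^ 2 * [:-b, 1:] = [:-1, 1:] ^ 2 * [:-x, 1:]"
    by (simp only:)
  moreover have "[:-1, 1:] ^ 2 \<noteq> (0 :: 'k poly)"
    by simp
  ultimately have "[:-b, 1:] = [:-x, 1:]"
    by (metis mult_left_cancel)
  with \<open>a = 1\<close> show ?thesis
    by simp
qed

lemma mat3_one_x_one_mult:
  "mat3 1 0 0 0 x 0 c d 1 ** mat3 1 0 0 0 y 0 c' d' 1 =
     (mat3 1 0 0 0 (x * y) 0 (c + c') (d * y + d') 1 :: 'k::comm_ring_1^3^3)"
  by (simp add: vec_eq_iff forall_3 matrix_matrix_mult_def sum_3)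

lemma funpow_phi_mat3_one_x_one:
  "phi (mat3 1 0 0 0 x 0 c d 1) ^^ n =
     phi (mat3 1 0 0 0 (x ^ n) 0 (of_nat n * c) (d * (\<Sum>j<n. x ^ j)) (1 :: 'k::comm_ring_1))"
proof (induction n)
  case 0
  have "mat3 1 0 0 0 1 0 0 0 1 = (mat 1 :: 'k^3^3)"
    by (simp add: vec_eq_iff forall_3 mat_def)
  then show ?case
    by (simp add: fun_eq_iff phi_mat_1)
next
  case (Suc n)
  show ?case
    unfolding funpow_Suc_right Suc.IH
    by (simp add: fun_eq_iff phi_phi mat3_one_x_one_mult algebra_simps)
qed

lemma finite_order_phi_mat3_one_x_one_iff:
  fixes \<xi> :: "'k::{idom, ring_char_0}"
  assumes "\<xi> \<noteq> 1"
  shows "(\<exists>n>0. phi (mat3 1 0 0 0 \<xi> 0 c d 1) ^^ n = id) \<longleftrightarrow> root_of_unity \<xi> \<and> c = 0"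
proof -
  have geometric: "(\<Sum>j<n. \<xi> ^ j) = 0" if "\<xi> ^ n = 1" for n
    using power_diff_1_eq[of \<xi> n] that assms by simp
  have "phi (mat3 1 0 0 0 \<xi> 0 c d 1) ^^ n = id \<longleftrightarrow>
      \<xi> ^ n = 1 \<and> of_nat n * c = 0 \<and> d * (\<Sum>j<n. \<xi> ^ j) = 0" for n
    by (auto simp: funpow_phi_mat3_one_x_one phi_eq_id_iff vec_eq_iff forall_3 mat_def)
  then show ?thesis
    using geometric by (auto simp: root_of_unity_def)
qed

lemma PR_eq:
  "(PR :: ('k::field_char_0^3^3) set) = {mat3 1 0 0 0 \<xi> 0 0 d 1 | \<xi> d. root_of_unity \<xi> \<and> \<xi> \<noteq> 1}"
proof (intro set_eqI iffI)
  fix A :: "'k^3^3"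
  assume "A \<in> PR"
  then obtain \<xi> where A: "A \<in> PAut_gr" "\<exists>n>0. phi A ^^ n = id" and \<xi>: "root_of_unity \<xi>" "\<xi> \<noteq> 1"
    and charpoly: "charpoly3 A = [:-1, 1:] ^ 2 * [:-\<xi>, 1:]"
    by (auto simp: PR_def)
  obtain a b c d where A_eq: "A = mat3 a 0 0 0 b 0 c d a"
    using PAut_gr_imp_mat3[OF A(1)] by blast
  have "a = 1" "b = \<xi>"
    using linear_factors_eq[OF charpoly[unfolded A_eq charpoly3_mat3] \<xi>(2)] by simp_all
  moreover have "c = 0"
    using A(2) finite_order_phi_mat3_one_x_one_iff[OF \<xi>(2)] by (simp add: A_eq \<open>a = 1\<close> \<open>b = \<xi>\<close>)
  ultimately show "A \<in> {mat3 1 0 0 0 \<xi> 0 0 d 1 | \<xi> d. root_of_unity \<xi> \<and> \<xi> \<noteq> 1}"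
    using A_eq \<xi> by blast
next
  fix A :: "'k^3^3"
  assume "A \<in> {mat3 1 0 0 0 \<xi> 0 0 d 1 | \<xi> d. root_of_unity \<xi> \<and> \<xi> \<noteq> 1}"
  then obtain \<xi> d where A: "A = mat3 1 0 0 0 \<xi> 0 0 d 1" and \<xi>: "root_of_unity \<xi>" "\<xi> \<noteq> 1"
    by blast
  have "\<xi> \<noteq> 0"
    using \<xi>(1) by (auto simp: root_of_unity_def power_0_left)
  then show "A \<in> PR"
    using \<xi> mat3_in_PAut_gr[of 1 \<xi> 0 d] finite_order_phi_mat3_one_x_one_iff[of \<xi> 0 d]
    by (auto simp: PR_def A charpoly3_mat3)
qed

theorem lemma3p2p1:
  shows "(PAut_gr :: ('k::{alg_closed_field, field_char_0} ^3^3) set) =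
           {mat3 a 0 0 0 b 0 c d a | a b c d. a \<noteq> 0 \<and> b \<noteq> 0}
       \<and> (PR :: ('k ^3^3) set) =
           {mat3 1 0 0 0 \<xi> 0 0 d 1 | \<xi> d. root_of_unity \<xi> \<and> \<xi> \<noteq> 1}"
  using PAut_gr_eq PR_eq by blast

end
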